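(* Let $A$ be an $n\times n$ Hermitian matrix. For all integers $1\le k\le m\le n$, $$\underbrace{X_m(A)\cup\dots\cup X_m(A)}_{\binom{m-1}{k-1}\text{ times}}\;\succ\;\underbrace{X_k(A)\cup\dots\cup X_k(A)}_{\binom{n-k}{m-k}\text{ times}}.$$
   Context: For $1\le m\le n$, $X_m(A)$ is the real vector (of length $m\binom nm$) listing the eigenvalues, with multiplicity, of all $\binom nm$ principal $m\times m$ submatrices of $A$. The symbol $\cup$ denotes concatenation of vectors. For $x\in\mathbb R^N$, $x^{\downarrow}$ is the non-increasing rearrangement of $x$; for $x,y\in\mathbb R^N$, $x\succ y$ means $\sum_{i=1}^k x^{\downarrow}_i\ge\sum_{i=1}^k y^{\downarrow}_i$ for all $k=1,\dots,N$ with equality for $k=N$ (majorization is invariant under reordering the entries). *)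

theory Defs
  imports "Jordan_Normal_Form.Char_Poly" "Jordan_Normal_Form.DL_Submatrix"
begin

definition hermitian_mat :: "complex mat \<Rightarrow> nat \<Rightarrow> bool" where
  "hermitian_mat A n \<longleftrightarrow> A \<in> carrier_mat n n \<and>
     (\<forall>i<n. \<forall>j<n. A $$ (i, j) = cnj (A $$ (j, i)))"

definition eigenvalues_mset :: "complex mat \<Rightarrow> complex multiset" where
  "eigenvalues_mset B = proots (char_poly B)"

text \<open>X_m(A): eigenvalues (with multiplicity, real parts; they are real for Hermitian A)
  of all principal m x m submatrices of A, collected as a multiset (the order of
  the entries is irrelevant for majorization).\<close>
definition X :: "nat \<Rightarrow> complex mat \<Rightarrow> real multiset" where
  "X m A = (\<Sum>I \<in> {I. I \<subseteq> {..<dim_row A} \<and> card I = m}.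
              image_mset Re (eigenvalues_mset (submatrix A I I)))"

definition desc :: "real multiset \<Rightarrow> real list" where
  "desc x = rev (sorted_list_of_multiset x)"

definition majorizes :: "real multiset \<Rightarrow> real multiset \<Rightarrow> bool" where
  "majorizes x y \<longleftrightarrow> size x = size y \<and>
     (\<forall>k\<in>{1..size x}. sum_list (take k (desc y)) \<le> sum_list (take k (desc x))) \<and>
     sum_list (take (size x) (desc x)) = sum_list (take (size x) (desc y))"

end

theory Submission
  imports
    Defs
    "Jordan_Normal_Form.Schur_Decomposition"
    "Jordan_Normal_Form.Spectral_Radius"
    "HOL-Analysis.Convex"
begin

text \<open>Let \<open>J \<subseteq> I\<close> be index sets with \<open>card J = k\<close> and \<open>card I = m\<close>, and take orthonormal
  eigenbases \<open>v\<^sub>l\<close> (eigenvalues \<open>\<mu>\<^sub>l\<close>) of the principal submatrix \<open>A[J,J]\<close> and \<open>u\<^sub>i\<close>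
  (eigenvalues \<open>\<lambda>\<^sub>i\<close>) of \<open>A[I,I]\<close>. Evaluating the quadratic form of \<open>A\<close> at \<open>v\<^sub>l\<close> in both
  bases gives \<open>\<mu>\<^sub>l = \<Sum>\<^sub>i w\<^sub>l\<^sub>i \<lambda>\<^sub>i\<close> with \<open>w\<^sub>l\<^sub>i = |\<langle>v\<^sub>l, u\<^sub>i\<rangle>|\<^sup>2\<close>, where
  \<open>\<Sum>\<^sub>i w\<^sub>l\<^sub>i = 1\<close> and \<open>\<Sum>\<^sub>l w\<^sub>l\<^sub>i\<close> is the squared norm of \<open>u\<^sub>i\<close> restricted to \<open>J\<close>. By Jensen,
  \<open>\<Sum>\<^sub>l f \<mu>\<^sub>l \<le> \<Sum>\<^sub>i f \<lambda>\<^sub>i \<parallel>u\<^sub>i|\<^sub>J\<parallel>\<^sup>2\<close> for convex \<open>f\<close>. Summing over all \<open>J \<subseteq> I\<close> of size \<open>k\<close>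
  covers each coordinate of \<open>I\<close> exactly \<open>(m - 1) choose (k - 1)\<close> times, and summing then over
  all \<open>I\<close> of size \<open>m\<close> covers each \<open>J\<close> exactly \<open>(n - k) choose (m - k)\<close> times. So the sum of
  any convex \<open>f\<close> over the right-hand multiset is at most its sum over the left-hand one, and
  by Hardy, Littlewood and Polya this is majorization; affine functions and the hinges
  \<open>t \<mapsto> max 0 (t - s)\<close> already suffice.\<close>

section \<open>Adjoints and the unitary Schur decomposition\<close>

lemma dim_mat_adjoint [simp]:
  "dim_row (mat_adjoint U) = dim_col U" "dim_col (mat_adjoint U) = dim_row U"
  unfolding mat_adjoint_def by auto

lemma index_mat_adjoint [simp]:
  "i < dim_col U \<Longrightarrow> j < dim_row U \<Longrightarrow> mat_adjoint U $$ (i, j) = cnj (U $$ (j, i))"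
  unfolding mat_adjoint_def by (simp add: mat_of_rows_index)

lemma mat_adjoint_carrier [simp]: "U \<in> carrier_mat n m \<Longrightarrow> mat_adjoint U \<in> carrier_mat m n"
  unfolding carrier_mat_def by auto

lemma mat_adjoint_adjoint [simp]: "mat_adjoint (mat_adjoint U) = (U :: complex mat)"
  by (rule eq_matI) auto

lemma mat_adjoint_one [simp]: "mat_adjoint (1\<^sub>m n) = (1\<^sub>m n :: complex mat)"
  by (rule eq_matI) auto

lemma mat_adjoint_mult:
  assumes "A \<in> carrier_mat n k" "B \<in> carrier_mat k m"
  shows "mat_adjoint (A * B) = mat_adjoint B * mat_adjoint (A :: complex mat)"
  by (rule eq_matI) (use assms in \<open>auto simp: scalar_prod_def intro!: sum.cong\<close>)

lemma mat_adjoint_four_block_mat: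
  assumes "A \<in> carrier_mat n1 m1" "B \<in> carrier_mat n1 m2"
    "C \<in> carrier_mat n2 m1" "D \<in> carrier_mat n2 m2"
  shows "mat_adjoint (four_block_mat A B C D :: complex mat)
    = four_block_mat (mat_adjoint A) (mat_adjoint C) (mat_adjoint B) (mat_adjoint D)"
  by (rule eq_matI) (use assms in auto)

lemma similar_mat_wit_conj:
  assumes "A \<in> carrier_mat n n" "P \<in> carrier_mat n n" "Q \<in> carrier_mat n n"
    and PQ: "P * Q = 1\<^sub>m n" and QP: "Q * P = 1\<^sub>m n"
  shows "similar_mat_wit A (Q * A * P) P Q"
proof (rule similar_mat_witI[OF PQ QP _ assms(1)])
  have "P * (Q * A * P) * Q = P * (Q * A) * (P * Q)"
    using assms by (simp add: assoc_mult_mat[of _ n n _ n _ n])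
  also have "P * (Q * A) = (P * Q) * A"
    using assms by (metis assoc_mult_mat)
  finally show "A = P * (Q * A * P) * Q"
    using assms by (simp add: PQ)
qed (use assms in auto)

definition vec_normalize :: "complex vec \<Rightarrow> complex vec" where
  "vec_normalize u = (1 / complex_of_real (sqrt (Re (u \<bullet>c u)))) \<cdot>\<^sub>v u"

lemma vec_normalize_carrier [simp]: "u \<in> carrier_vec n \<Longrightarrow> vec_normalize u \<in> carrier_vec n"
  unfolding vec_normalize_def by simp

lemma cscalar_prod_self_real:
  fixes u :: "complex vec"
  shows "u \<bullet>c u = complex_of_real (Re (u \<bullet>c u))" and "0 \<le> Re (u \<bullet>c u)"
  using conjugate_square_ge_0_vec[of u] by (auto simp: less_eq_complex_def complex_eq_iff)

lemma cscalar_prod_self_pos: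
  assumes "u \<in> carrier_vec n" "u \<noteq> 0\<^sub>v n"
  shows "0 < Re (u \<bullet>c u)"
proof -
  have "Re (u \<bullet>c u) \<noteq> 0"
    using assms cscalar_prod_self_real(1)[of u] by (metis conjugate_square_eq_0_vec of_real_0)
  then show ?thesis
    using cscalar_prod_self_real(2)[of u] by linarith
qed

lemma cscalar_prod_smult:
  assumes "u \<in> carrier_vec n" "w \<in> carrier_vec n"
  shows "(a \<cdot>\<^sub>v u) \<bullet>c (b \<cdot>\<^sub>v w) = a * cnj b * (u \<bullet>c (w :: complex vec))"
  using assms unfolding scalar_prod_def by (auto simp: sum_distrib_left intro!: sum.cong)

lemma vec_normalize_cscalar_prod:
  assumes "u \<in> carrier_vec n" "w \<in> carrier_vec n"
  shows "vec_normalize u \<bullet>c vec_normalize w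
    = (u \<bullet>c w) / complex_of_real (sqrt (Re (u \<bullet>c u)) * sqrt (Re (w \<bullet>c w)))"
  unfolding vec_normalize_def cscalar_prod_smult[OF assms] by simp

lemma vec_normalize_unit:
  assumes "u \<in> carrier_vec n" "u \<noteq> 0\<^sub>v n"
  shows "vec_normalize u \<bullet>c vec_normalize u = 1"
proof -
  have pos: "0 < Re (u \<bullet>c u)"
    using cscalar_prod_self_pos[OF assms] .
  have "sqrt (Re (u \<bullet>c u)) * sqrt (Re (u \<bullet>c u)) = Re (u \<bullet>c u)"
    using pos by simp
  then show ?thesis
    unfolding vec_normalize_cscalar_prod[OF assms(1) assms(1)]
    using pos by (subst cscalar_prod_self_real(1)) simp
qed

lemma corthogonal_map_vec_normalize:
  assumes ws: "set ws \<subseteq> carrier_vec n" "corthogonal ws"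
  shows "corthogonal (map vec_normalize ws)"
proof (rule corthogonalI)
  fix i j assume "i < length (map vec_normalize ws)" "j < length (map vec_normalize ws)"
  then have i: "i < length ws" and j: "j < length ws" by auto
  have carrier: "ws ! k \<in> carrier_vec n" if "k < length ws" for k
    using that ws(1) by auto
  have pos: "0 < Re (ws ! k \<bullet>c ws ! k)" if "k < length ws" for k
    using corthogonalD[OF ws(2) that that] carrier[OF that]
    by (intro cscalar_prod_self_pos[of _ n]) auto
  show "(map vec_normalize ws ! i \<bullet>c map vec_normalize ws ! j = 0) = (i \<noteq> j)"
    using corthogonalD[OF ws(2) i j] pos[OF i] pos[OF j] i j
    by (simp add: vec_normalize_cscalar_prod[OF carrier[OF i] carrier[OF j]])
qed

lemma mat_of_orthonormal_cols:
  fixes ws :: "complex vec list"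
  assumes ws: "set ws \<subseteq> carrier_vec n" "length ws = n" "corthogonal ws"
    and unit: "\<forall>w\<in>set ws. w \<bullet>c w = 1"
  defines "W \<equiv> mat_of_cols n ws"
  shows "corthogonal_inv W = mat_adjoint W"
    and "mat_adjoint W * W = 1\<^sub>m n" and "W * mat_adjoint W = 1\<^sub>m n"
proof -
  have W: "W \<in> carrier_mat n n"
    unfolding W_def using ws by auto
  show inv: "corthogonal_inv W = mat_adjoint W"
  proof (rule eq_matI)
    fix i j assume "i < dim_row (mat_adjoint W)" "j < dim_col (mat_adjoint W)"
    then have i: "i < n" and j: "j < n"
      using W by auto
    have col: "col W i = ws ! i"
      unfolding W_def using i ws by (intro col_mat_of_cols) auto
    have "ws ! i \<in> carrier_vec n" "ws ! i \<bullet>c ws ! i = 1"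
      using i ws unit by auto
    then show "corthogonal_inv W $$ (i, j) = mat_adjoint W $$ (i, j)"
      using i j W col[symmetric]
      by (simp add: corthogonal_inv_def mat_of_rows_index vec_inv_def)
  qed (use W in \<open>auto simp: corthogonal_inv_def\<close>)
  have "inverts_mat (mat_adjoint W) W"
    using corthogonal_inv_result[OF orthogonal_mat_of_cols[OF ws(1,3,2)]]
    unfolding W_def[symmetric] inv .
  then show left: "mat_adjoint W * W = 1\<^sub>m n"
    using W unfolding inverts_mat_def by auto
  show "W * mat_adjoint W = 1\<^sub>m n"
    using mat_mult_left_right_inverse[OF _ W left] W by auto
qed

lemma orthonormal_list_with_hd:
  fixes v :: "complex vec"
  assumes v: "v \<in> carrier_vec n" and v0: "v \<noteq> 0\<^sub>v n"
  obtains ws where "set ws \<subseteq> carrier_vec n" "length ws = n" "corthogonal ws"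
    "\<forall>w\<in>set ws. w \<bullet>c w = 1" "hd ws = vec_normalize v"
proof -
  interpret cof_vec_space n "TYPE(complex)" .
  have n: "n \<noteq> 0"
    using v v0 by auto
  define b where "b = basis_completion v"
  define ws where "ws = gram_schmidt n b"
  from basis_completion[OF v v0, folded b_def]
  have b: "set b \<subseteq> carrier_vec n" "distinct b" "\<not> lin_dep (set b)" "length b = n" "hd b = v"
    by auto
  then obtain vs where bv: "b = v # vs"
    using n by (cases b) auto
  from gram_schmidt_result[OF b(1-3) refl, folded ws_def]
  have ws: "set ws \<subseteq> carrier_vec n" "corthogonal ws" "length ws = n"
    using b(4) by auto
  have hd_ws: "hd ws = v"
    using gram_schmidt_hd[OF v, of vs] unfolding ws_def bv .
  have "w \<noteq> 0\<^sub>v n" if "w \<in> set ws" for w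
    using that ws corthogonalD[OF ws(2)]
    by (metis in_set_conv_nth conjugate_square_eq_0_vec subsetD)
  then have "\<forall>w\<in>set (map vec_normalize ws). w \<bullet>c w = 1"
    using ws vec_normalize_unit by auto
  moreover have "hd (map vec_normalize ws) = vec_normalize v"
    using hd_ws ws(3) n by (cases ws) auto
  ultimately show thesis
    using ws corthogonal_map_vec_normalize[OF ws(1,2)] by (intro that) auto
qed

lemma eigenvalue_unitary_deflation:
  fixes A :: "complex mat"
  assumes A: "A \<in> carrier_mat n n" and ev: "eigenvalue A e" and n: "n \<noteq> 0"
  obtains W where "similar_mat_wit A (mat_adjoint W * A * W) W (mat_adjoint W)"
    and "col (mat_adjoint W * A * W) 0 = vec n (\<lambda>i. if i = 0 then e else 0)"
proof -
  define v where "v = find_eigenvector A e"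
  have "eigenvector A v e"
    unfolding v_def using find_eigenvector[OF A ev] .
  then have v: "v \<in> carrier_vec n" and v0: "v \<noteq> 0\<^sub>v n" and eig: "A *\<^sub>v v = e \<cdot>\<^sub>v v"
    using A unfolding eigenvector_def by auto
  obtain ws where ws: "set ws \<subseteq> carrier_vec n" "length ws = n" "corthogonal ws"
    and unit: "\<forall>w\<in>set ws. w \<bullet>c w = 1" and hd_ws: "hd ws = vec_normalize v"
    using orthonormal_list_with_hd[OF v v0] by blast
  have v': "vec_normalize v \<in> carrier_vec n" "vec_normalize v \<noteq> 0\<^sub>v n"
    using v vec_normalize_unit[OF v v0] by auto
  have eig': "A *\<^sub>v vec_normalize v = e \<cdot>\<^sub>v vec_normalize v"
    unfolding vec_normalize_def
    by (simp add: mult_mat_vec[OF A v] eig smult_smult_assoc mult.commute)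
  define W where "W = mat_of_cols n ws"
  note W_unitary = mat_of_orthonormal_cols[OF ws unit, folded W_def]
  have W: "W \<in> carrier_mat n n"
    unfolding W_def using ws by auto
  show thesis
  proof
    show "similar_mat_wit A (mat_adjoint W * A * W) W (mat_adjoint W)"
      using similar_mat_wit_conj[OF A W _ W_unitary(3,2)] W by simp
    have "col (corthogonal_inv W * A * W) 0 = vec n (\<lambda>i. if i = 0 then e else 0)"
      using corthogonal_col_ev_0[OF A v' eig' n hd_ws ws(1,3,2)] unfolding W_def .
    then show "col (mat_adjoint W * A * W) 0 = vec n (\<lambda>i. if i = 0 then e else 0)"
      unfolding W_unitary(1) .
  qed
qed

lemma split_block_eigen_col:
  assumes A': "A' \<in> carrier_mat (1 + n) (1 + n)"
    and col0: "col A' 0 = vec (1 + n) (\<lambda>i. if i = 0 then e else 0)"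
    and split: "split_block A' 1 1 = (A1, A2, A0, A3)"
  shows "A1 = mat 1 1 (\<lambda>_. e)" and "A0 = 0\<^sub>m n 1"
proof -
  show "A1 = mat 1 1 (\<lambda>_. e)"
    using split[unfolded split_block_def Let_def] arg_cong[OF col0, of "\<lambda>v. v $ 0"] A'
    by (auto simp: col_def)
  have "A' $$ (Suc i, 0) = 0" if "i < n" for i
    using arg_cong[OF col0, of "\<lambda>v. v $ Suc i"] A' that by auto
  then show "A0 = 0\<^sub>m n 1"
    using split[unfolded split_block_def Let_def] A' by auto
qed

text \<open>The library's \<^const>\<open>schur_decomposition\<close> orthogonalises without normalising, so its
  similarity is not unitary; the induction is redone here with orthonormal bases.\<close>

theorem unitary_schur_decomposition:
  fixes A :: "complex mat"
  assumes "A \<in> carrier_mat n n"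
  shows "\<exists>P T. similar_mat_wit A T P (mat_adjoint P) \<and> upper_triangular T"
  using assms
proof (induction n arbitrary: A)
  case 0
  then show ?case
    using similar_mat_wit_refl[OF 0] by (intro exI[of _ "1\<^sub>m 0"] exI[of _ A]) auto
next
  case (Suc n A)
  obtain e where "eigenvalue A e"
    using spectrum_non_empty[OF Suc.prems] unfolding spectrum_def by auto
  then obtain W where sim_W: "similar_mat_wit A (mat_adjoint W * A * W) W (mat_adjoint W)"
    and col0: "col (mat_adjoint W * A * W) 0 = vec (Suc n) (\<lambda>i. if i = 0 then e else 0)"
    using eigenvalue_unitary_deflation[OF Suc.prems] by blast
  define A' where "A' = mat_adjoint W * A * W"
  have A': "A' \<in> carrier_mat (1 + n) (1 + n)"
    using similar_mat_witD2(5)[OF Suc.prems sim_W] unfolding A'_def by simp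
  obtain A1 A2 A0 A3 where split: "split_block A' 1 1 = (A1, A2, A0, A3)"
    by (cases "split_block A' 1 1") auto
  note blocks = split_block[OF split carrier_matD[OF A']]
  have A1: "A1 = mat 1 1 (\<lambda>_. e)" and A0: "A0 = 0\<^sub>m n 1"
    using split_block_eigen_col[OF A' _ split] col0 unfolding A'_def by auto
  obtain P T where sim_P: "similar_mat_wit A3 T P (mat_adjoint P)" and ut: "upper_triangular T"
    using Suc.IH[OF blocks(4)] by blast
  note P = similar_mat_witD2[OF blocks(4) sim_P]
  define P' where "P' = four_block_mat (1\<^sub>m 1) (0\<^sub>m 1 n) (0\<^sub>m n 1) P"
  define T' where "T' = four_block_mat A1 (A2 * P) A0 T"
  have A2: "A2 * P * mat_adjoint P = A2"
    using blocks(2) P by (simp add: assoc_mult_mat[of _ 1 n _ n _ n])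
  have "similar_mat_wit A' T' P'
      (four_block_mat (1\<^sub>m 1) (0\<^sub>m 1 n) (0\<^sub>m n 1) (mat_adjoint P))"
    unfolding blocks(5) T'_def P'_def
    by (rule similar_mat_wit_four_block[OF similar_mat_wit_refl sim_P])
      (use blocks P A0 A1 A2 in auto)
  also have "four_block_mat (1\<^sub>m 1) (0\<^sub>m 1 n) (0\<^sub>m n 1) (mat_adjoint P) = mat_adjoint P'"
    unfolding P'_def using P by (subst mat_adjoint_four_block_mat) auto
  finally have sim_P': "similar_mat_wit A' T' P' (mat_adjoint P')" .
  have "mat_adjoint P' * mat_adjoint W = mat_adjoint (W * P')"
    using similar_mat_witD2[OF A' sim_P'] similar_mat_witD2[OF Suc.prems sim_W]
    by (simp add: mat_adjoint_mult)
  moreover have "upper_triangular T'"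
    unfolding T'_def A0 using P(5) ut A1 by (intro upper_triangular_four_block) auto
  ultimately show ?case
    using similar_mat_wit_trans[OF sim_W[folded A'_def] sim_P'] by metis
qed

section \<open>The spectral theorem for Hermitian matrices\<close>

lemma hermitian_matD:
  assumes "hermitian_mat A n"
  shows "A \<in> carrier_mat n n" and "i < n \<Longrightarrow> j < n \<Longrightarrow> A $$ (i, j) = cnj (A $$ (j, i))"
  using assms unfolding hermitian_mat_def by blast+

lemma hermitian_mat_iff_adjoint:
  "hermitian_mat B m \<longleftrightarrow> B \<in> carrier_mat m m \<and> mat_adjoint B = B"
proof
  assume herm: "hermitian_mat B m"
  note B = hermitian_matD(1)[OF herm]
  have "mat_adjoint B $$ (i, j) = B $$ (i, j)" if "i < m" "j < m" for i j
    using hermitian_matD(2)[OF herm that(2,1)] B that by simp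
  then show "B \<in> carrier_mat m m \<and> mat_adjoint B = B"
    using B by (intro conjI eq_matI) auto
next
  assume B: "B \<in> carrier_mat m m \<and> mat_adjoint B = B"
  have "B $$ (i, j) = cnj (B $$ (j, i))" if "i < m" "j < m" for i j
    using B index_mat_adjoint[of i B j] that by (metis carrier_matD)
  then show "hermitian_mat B m"
    using B unfolding hermitian_mat_def by blast
qed

lemma hermitian_mat_unitary_conj:
  assumes B: "hermitian_mat B m" and sim: "similar_mat_wit B T P (mat_adjoint P)"
  shows "hermitian_mat T m"
proof -
  have B_adj: "B \<in> carrier_mat m m" "mat_adjoint B = B"
    using B hermitian_mat_iff_adjoint by auto
  have T: "T \<in> carrier_mat m m"
    using similar_mat_witD2(5)[OF B_adj(1) sim] .
  note wit = similar_mat_witD2[OF T similar_mat_wit_sym[OF sim]]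
  have "mat_adjoint (mat_adjoint P * B * P) = mat_adjoint P * B * P"
    using wit B_adj by (simp add: mat_adjoint_mult[of _ m m _ m] assoc_mult_mat[of _ m m _ m _ m])
  then show ?thesis
    using wit T unfolding hermitian_mat_iff_adjoint by auto
qed

lemma hermitian_upper_triangular_diagonal:
  assumes T: "hermitian_mat T m" and ut: "upper_triangular T" and ij: "i < m" "j < m"
  shows "T $$ (i, j) = (if i = j then complex_of_real (Re (T $$ (i, i))) else 0)"
proof (cases "i = j")
  case True
  from arg_cong[OF hermitian_matD(2)[OF T ij(1) ij(1)], of Im] have "Im (T $$ (i, i)) = 0"
    by simp
  then show ?thesis
    using True by (simp add: complex_eq_iff)
next
  case False
  note T_carrier = hermitian_matD(1)[OF T] and herm = hermitian_matD(2)[OF T ij]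
  show ?thesis
  proof (cases "j < i")
    case True
    then show ?thesis
      using ut T_carrier ij by (auto simp: upper_triangular_def)
  next
    case False
    then have "T $$ (j, i) = 0"
      using ut T_carrier ij \<open>i \<noteq> j\<close> by (auto simp: upper_triangular_def)
    then show ?thesis
      using herm \<open>i \<noteq> j\<close> by simp
  qed
qed

lemma proots_prod_list_linear_factors:
  "proots (\<Prod>a\<leftarrow>as. [:- a, 1:]) = mset (as :: complex list)"
proof (induction as)
  case (Cons a as)
  have "proots ([:- a, 1:] * (\<Prod>a\<leftarrow>as. [:- a, 1:]))
      = proots [:- a, 1:] + proots (\<Prod>a\<leftarrow>as. [:- a, 1:])"
    by (rule proots_mult) auto
  then show ?case
    using Cons by simp
qed simp

theorem hermitian_spectral_decomposition:
  assumes B: "hermitian_mat B m"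
  obtains U and lam :: "nat \<Rightarrow> real"
  where "similar_mat_wit B (mat m m (\<lambda>(i, j). if i = j then complex_of_real (lam i) else 0))
      U (mat_adjoint U)"
    and "image_mset Re (eigenvalues_mset B) = mset (map lam [0..<m])"
proof -
  note B_carrier = hermitian_matD(1)[OF B]
  obtain P T where sim: "similar_mat_wit B T P (mat_adjoint P)" and ut: "upper_triangular T"
    using unitary_schur_decomposition[OF B_carrier] by blast
  have T: "T \<in> carrier_mat m m"
    using similar_mat_witD2[OF B_carrier sim] by blast
  define lam where "lam i = Re (T $$ (i, i))" for i
  have "T $$ (i, j) = (if i = j then complex_of_real (lam i) else 0)" if "i < m" "j < m" for i j
    unfolding lam_def
    by (rule hermitian_upper_triangular_diagonal[OF hermitian_mat_unitary_conj[OF B sim] ut that])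
  then have T_diag: "T = mat m m (\<lambda>(i, j). if i = j then complex_of_real (lam i) else 0)"
    using T by (intro eq_matI) auto
  have "char_poly B = char_poly T"
    using sim by (intro char_poly_similar) (auto simp: similar_mat_def)
  also have "\<dots> = (\<Prod>a\<leftarrow>diag_mat T. [:- a, 1:])"
    by (rule char_poly_upper_triangular[OF T ut])
  finally have "eigenvalues_mset B = mset (diag_mat T)"
    unfolding eigenvalues_mset_def by (simp add: proots_prod_list_linear_factors)
  then have "image_mset Re (eigenvalues_mset B) = mset (map lam [0..<m])"
    using T unfolding diag_mat_def lam_def by (simp add: multiset.map_comp o_def)
  with sim show thesis
    using that unfolding T_diag by blast
qed

section \<open>Spectral frames of principal submatrices\<close>

lemma index_mult_diag_mat_adjoint:
  assumes U: "U \<in> carrier_mat m m" and ab: "a < m" "b < m"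
  shows "(U * mat m m (\<lambda>(i, j). if i = j then d i else 0) * mat_adjoint U) $$ (a, b)
    = (\<Sum>l<m. U $$ (a, l) * d l * cnj (U $$ (b, l)))"
proof -
  have "(U * mat m m (\<lambda>(i, j). if i = j then d i else 0)) $$ (a, l) = U $$ (a, l) * d l"
    if "l < m" for l
    using U ab that by (simp add: scalar_prod_def lessThan_atLeast0 if_distrib cong: if_cong)
  then show ?thesis
    using U ab by (simp add: scalar_prod_def lessThan_atLeast0)
qed

lemma unitary_mat_entries:
  assumes U: "U \<in> carrier_mat m m" and ij: "i < m" "j < m"
  shows "mat_adjoint U * U = 1\<^sub>m m \<Longrightarrow>
      (\<Sum>a<m. cnj (U $$ (a, i)) * U $$ (a, j)) = (if i = j then 1 else 0)"
    and "U * mat_adjoint U = 1\<^sub>m m \<Longrightarrow>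
      (\<Sum>l<m. U $$ (i, l) * cnj (U $$ (j, l))) = (if i = j then 1 else 0)"
  using U ij by (auto dest!: arg_cong[of _ _ "\<lambda>M. M $$ (i, j)"]
      simp: scalar_prod_def lessThan_atLeast0)

lemma pick_bij_betw:
  assumes "finite I"
  shows "bij_betw (pick I) {..<card I} I"
proof (rule bij_betw_byWitness[where f' = "\<lambda>p. card {a\<in>I. a < p}"])
  show "\<forall>a\<in>{..<card I}. card {x \<in> I. x < pick I a} = a"
    by (simp add: card_pick_le)
  show "\<forall>p\<in>I. pick I (card {a \<in> I. a < p}) = p"
    by (simp add: pick_card_in_set)
  show "pick I ` {..<card I} \<subseteq> I"
    by (auto intro: pick_in_set_le)
  have "card {a \<in> I. a < p} < card I" if "p \<in> I" for p
    using assms that by (intro psubset_card_mono) auto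
  then show "(\<lambda>p. card {a \<in> I. a < p}) ` I \<subseteq> {..<card I}"
    by auto
qed

text \<open>\<open>u p i\<close> (for \<open>p \<in> I\<close>) is the \<open>p\<close>-th coordinate of the \<open>i\<close>-th vector of an
  orthonormal eigenbasis of the principal submatrix of \<open>A\<close> on \<open>I\<close>, with eigenvalue \<open>lam i\<close>;
  coordinates are indexed by \<open>I\<close> itself rather than by positions in \<open>{..<card I}\<close>, so
  that frames of nested index sets can be compared directly.\<close>

definition spectral_frame ::
    "complex mat \<Rightarrow> nat set \<Rightarrow> (nat \<Rightarrow> nat \<Rightarrow> complex) \<Rightarrow> (nat \<Rightarrow> real) \<Rightarrow> bool" where
  "spectral_frame A I u lam \<longleftrightarrow>
     (\<forall>p\<in>I. \<forall>q\<in>I. A $$ (p, q) = (\<Sum>i<card I. u p i * complex_of_real (lam i) * cnj (u q i))) \<and>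
     (\<forall>i<card I. \<forall>j<card I. (\<Sum>p\<in>I. cnj (u p i) * u p j) = (if i = j then 1 else 0)) \<and>
     (\<forall>p\<in>I. \<forall>q\<in>I. (\<Sum>i<card I. u p i * cnj (u q i)) = (if p = q then 1 else 0)) \<and>
     image_mset Re (eigenvalues_mset (submatrix A I I)) = mset (map lam [0..<card I])"

lemma spectral_frameD:
  assumes "spectral_frame A I u lam"
  shows "\<And>p q. p \<in> I \<Longrightarrow> q \<in> I \<Longrightarrow>
      A $$ (p, q) = (\<Sum>i<card I. u p i * complex_of_real (lam i) * cnj (u q i))"
    and "\<And>i j. i < card I \<Longrightarrow> j < card I \<Longrightarrow>
      (\<Sum>p\<in>I. cnj (u p i) * u p j) = (if i = j then 1 else 0)"
    and "\<And>p q. p \<in> I \<Longrightarrow> q \<in> I \<Longrightarrow>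
      (\<Sum>i<card I. u p i * cnj (u q i)) = (if p = q then 1 else 0)"
    and "image_mset Re (eigenvalues_mset (submatrix A I I)) = mset (map lam [0..<card I])"
  using assms unfolding spectral_frame_def by blast+

lemma hermitian_mat_submatrix:
  assumes A: "hermitian_mat A n" and I: "I \<subseteq> {..<n}"
  shows "hermitian_mat (submatrix A I I) (card I)"
    and "\<And>a b. a < card I \<Longrightarrow> b < card I \<Longrightarrow> submatrix A I I $$ (a, b) = A $$ (pick I a, pick I b)"
proof -
  have dims: "{i. i < dim_row A \<and> i \<in> I} = I" "{i. i < dim_col A \<and> i \<in> I} = I"
    using hermitian_matD(1)[OF A] I by auto
  show index: "submatrix A I I $$ (a, b) = A $$ (pick I a, pick I b)"
    if "a < card I" "b < card I" for a b
    using that by (intro submatrix_index) (auto simp: dims)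
  have pick: "pick I a < n" if "a < card I" for a
    using pick_in_set_le[OF that] I by auto
  show "hermitian_mat (submatrix A I I) (card I)"
    unfolding hermitian_mat_def
  proof (intro conjI allI impI)
    show "submatrix A I I \<in> carrier_mat (card I) (card I)"
      by (rule carrier_matI) (simp_all only: dim_submatrix dims)
    fix a b assume ab: "a < card I" "b < card I"
    show "submatrix A I I $$ (a, b) = cnj (submatrix A I I $$ (b, a))"
      unfolding index[OF ab] index[OF ab(2,1)]
      by (rule hermitian_matD(2)[OF A pick[OF ab(1)] pick[OF ab(2)]])
  qed
qed

lemma spectral_frame_reindex:
  assumes I: "finite I" and U: "U \<in> carrier_mat (card I) (card I)"
    and unitary: "mat_adjoint U * U = 1\<^sub>m (card I)" "U * mat_adjoint U = 1\<^sub>m (card I)"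
    and entries: "\<And>a b. a < card I \<Longrightarrow> b < card I \<Longrightarrow>
      A $$ (pick I a, pick I b)
        = (\<Sum>l<card I. U $$ (a, l) * complex_of_real (lam l) * cnj (U $$ (b, l)))"
    and eigenvalues:
      "image_mset Re (eigenvalues_mset (submatrix A I I)) = mset (map lam [0..<card I])"
  shows "spectral_frame A I (\<lambda>p i. U $$ (the_inv_into {..<card I} (pick I) p, i)) lam"
proof -
  define pos where "pos = the_inv_into {..<card I} (pick I)"
  have bij: "bij_betw (pick I) {..<card I} I"
    using I by (rule pick_bij_betw)
  have pos: "pos p < card I" "pick I (pos p) = p" if "p \<in> I" for p
    using that bij unfolding pos_def bij_betw_def
    by (metis lessThan_iff subset_refl the_inv_into_into, metis f_the_inv_into_f)
  have pos_pick: "pos (pick I a) = a" if "a < card I" for a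
    using that bij unfolding pos_def by (auto intro: the_inv_into_f_f simp: bij_betw_def)
  show ?thesis
    unfolding spectral_frame_def pos_def[symmetric]
  proof (intro conjI ballI allI impI eigenvalues)
    fix p q assume p: "p \<in> I" and q: "q \<in> I"
    show "A $$ (p, q)
        = (\<Sum>i<card I. U $$ (pos p, i) * complex_of_real (lam i) * cnj (U $$ (pos q, i)))"
      using entries[OF pos(1)[OF p] pos(1)[OF q]] pos p q by simp
    show "(\<Sum>i<card I. U $$ (pos p, i) * cnj (U $$ (pos q, i))) = (if p = q then 1 else 0)"
      using unitary_mat_entries(2)[OF U pos(1)[OF p] pos(1)[OF q] unitary(2)]
        pos(2)[OF p] pos(2)[OF q]
      by (smt (verit))
  next
    fix i j assume ij: "i < card I" "j < card I"
    show "(\<Sum>p\<in>I. cnj (U $$ (pos p, i)) * U $$ (pos p, j)) = (if i = j then 1 else 0)"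
      using unitary_mat_entries(1)[OF U ij unitary(1)] pos_pick
      unfolding sum.reindex_bij_betw[OF bij, symmetric] by simp
  qed
qed

lemma spectral_frame_exists:
  assumes A: "hermitian_mat A n" and I: "I \<subseteq> {..<n}"
  shows "\<exists>u lam. spectral_frame A I u lam"
proof -
  note S = hermitian_mat_submatrix[OF A I]
  obtain U and lam :: "nat \<Rightarrow> real" where sim: "similar_mat_wit (submatrix A I I)
      (mat (card I) (card I) (\<lambda>(i, j). if i = j then complex_of_real (lam i) else 0))
      U (mat_adjoint U)"
    and eigenvalues:
      "image_mset Re (eigenvalues_mset (submatrix A I I)) = mset (map lam [0..<card I])"
    using hermitian_spectral_decomposition[OF S(1)] by blast
  note wit = similar_mat_witD2[OF hermitian_matD(1)[OF S(1)] sim]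
  have "A $$ (pick I a, pick I b)
      = (\<Sum>l<card I. U $$ (a, l) * complex_of_real (lam l) * cnj (U $$ (b, l)))"
    if "a < card I" "b < card I" for a b
    unfolding S(2)[OF that, symmetric]
    by (subst wit(3)) (rule index_mult_diag_mat_adjoint[OF wit(6) that])
  then show ?thesis
    using spectral_frame_reindex[OF finite_subset[OF I finite_lessThan] wit(6) wit(2,1) _
        eigenvalues]
    by blast
qed

lemma quadratic_form_rank_one_sum:
  fixes y :: "'a \<Rightarrow> complex" and x :: "'a \<Rightarrow> nat \<Rightarrow> complex" and c :: "nat \<Rightarrow> real"
  assumes M: "\<And>p q. p \<in> J \<Longrightarrow> q \<in> J \<Longrightarrow> M p q = (\<Sum>i<N. x p i * complex_of_real (c i) * cnj (x q i))"
  shows "(\<Sum>p\<in>J. \<Sum>q\<in>J. cnj (y p) * M p q * y q)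
    = complex_of_real (\<Sum>i<N. c i * (cmod (\<Sum>p\<in>J. cnj (y p) * x p i))\<^sup>2)"
proof -
  have "(\<Sum>p\<in>J. \<Sum>q\<in>J. cnj (y p) * M p q * y q)
      = (\<Sum>p\<in>J. \<Sum>q\<in>J. \<Sum>i<N. c i * (cnj (y p) * x p i) * (y q * cnj (x q i)))"
    using M by (intro sum.cong refl) (simp add: sum_distrib_left sum_distrib_right mult_ac)
  also have "\<dots> = (\<Sum>i<N. \<Sum>p\<in>J. \<Sum>q\<in>J. c i * (cnj (y p) * x p i) * (y q * cnj (x q i)))"
    by (subst sum.swap, subst (2) sum.swap) (rule refl)
  also have "\<dots> = (\<Sum>i<N. c i * ((\<Sum>p\<in>J. cnj (y p) * x p i) * cnj (\<Sum>p\<in>J. cnj (y p) * x p i)))"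
    by (simp add: sum_distrib_left sum_distrib_right mult_ac)
  also have "\<dots> = complex_of_real (\<Sum>i<N. c i * (cmod (\<Sum>p\<in>J. cnj (y p) * x p i))\<^sup>2)"
    unfolding of_real_sum of_real_mult complex_norm_square ..
  finally show ?thesis .
qed

lemma sum_cnj_mult_self:
  fixes y :: "'a \<Rightarrow> complex"
  shows "(\<Sum>p\<in>J. cnj (y p) * y p) = complex_of_real (\<Sum>p\<in>J. (cmod (y p))\<^sup>2)"
  unfolding of_real_sum complex_norm_square by (simp add: mult.commute)

lemma quadratic_form_identity:
  fixes y :: "'a \<Rightarrow> complex"
  assumes "finite J"
  shows "(\<Sum>p\<in>J. \<Sum>q\<in>J. cnj (y p) * (if p = q then 1 else 0) * y q)
    = complex_of_real (\<Sum>p\<in>J. (cmod (y p))\<^sup>2)"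
proof -
  have "(\<Sum>q\<in>J. cnj (y p) * (if p = q then 1 else 0) * y q) = cnj (y p) * y p" if "p \<in> J" for p
    using assms that by (simp add: if_distrib[of "\<lambda>z. cnj (y p) * z * _"] cong: if_cong)
  then have "(\<Sum>p\<in>J. \<Sum>q\<in>J. cnj (y p) * (if p = q then 1 else 0) * y q) = (\<Sum>p\<in>J. cnj (y p) * y p)"
    by (rule sum.cong[OF refl])
  then show ?thesis
    unfolding sum_cnj_mult_self .
qed

lemma spectral_frame_col_norm:
  assumes "spectral_frame A I u lam" and "i < card I"
  shows "(\<Sum>p\<in>I. (cmod (u p i))\<^sup>2) = 1"
  using spectral_frameD(2)[OF assms(1) assms(2) assms(2)]
  unfolding sum_cnj_mult_self by (metis of_real_eq_1_iff)

definition overlap :: "nat set \<Rightarrow> (nat \<Rightarrow> nat \<Rightarrow> complex) \<Rightarrow> nat \<Rightarrow> (nat \<Rightarrow> nat \<Rightarrow> complex) \<Rightarrow> nat \<Rightarrow> real"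
  where "overlap J v l u i = (cmod (\<Sum>p\<in>J. cnj (v p l) * u p i))\<^sup>2"

context
  fixes A :: "complex mat" and I J :: "nat set" and u v :: "nat \<Rightarrow> nat \<Rightarrow> complex"
    and lam mu :: "nat \<Rightarrow> real"
  assumes frame_I: "spectral_frame A I u lam" and frame_J: "spectral_frame A J v mu"
    and JI: "J \<subseteq> I" and fin: "finite I"
begin

lemma spectral_frame_subset_eigenvalue:
  assumes l: "l < card J"
  shows "mu l = (\<Sum>i<card I. lam i * overlap J v l u i)"
proof -
  let ?Q = "\<Sum>p\<in>J. \<Sum>q\<in>J. cnj (v p l) * A $$ (p, q) * v q l"
  have "(\<Sum>j<card J. mu j * (cmod (\<Sum>p\<in>J. cnj (v p l) * v p j))\<^sup>2)
      = (\<Sum>j<card J. if j = l then mu l else 0)"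
    using l by (intro sum.cong refl) (auto simp: spectral_frameD(2)[OF frame_J])
  also have "\<dots> = mu l"
    using l by simp
  finally have orthonormal: "(\<Sum>j<card J. mu j * (cmod (\<Sum>p\<in>J. cnj (v p l) * v p j))\<^sup>2) = mu l" .
  have "?Q = complex_of_real (mu l)"
    unfolding orthonormal[symmetric]
    by (rule quadratic_form_rank_one_sum) (rule spectral_frameD(1)[OF frame_J])
  moreover have "?Q = complex_of_real (\<Sum>i<card I. lam i * overlap J v l u i)"
    unfolding overlap_def
    by (rule quadratic_form_rank_one_sum) (use JI spectral_frameD(1)[OF frame_I] in blast)
  ultimately show ?thesis
    by (simp only: of_real_eq_iff)
qed

lemma spectral_frame_subset_sum_overlap_I:
  assumes l: "l < card J"
  shows "(\<Sum>i<card I. overlap J v l u i) = 1"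
proof -
  let ?Q = "\<Sum>p\<in>J. \<Sum>q\<in>J. cnj (v p l) * (if p = q then 1 else 0) * v q l"
  have "(if p = q then 1 else 0) = (\<Sum>i<card I. u p i * complex_of_real 1 * cnj (u q i))"
    if "p \<in> J" "q \<in> J" for p q
    using spectral_frameD(3)[OF frame_I subsetD[OF JI that(1)] subsetD[OF JI that(2)]] by simp
  then have "?Q = complex_of_real (\<Sum>i<card I. 1 * overlap J v l u i)"
    unfolding overlap_def by (rule quadratic_form_rank_one_sum)
  moreover have "?Q = complex_of_real (\<Sum>p\<in>J. (cmod (v p l))\<^sup>2)"
    using JI fin by (intro quadratic_form_identity) (rule finite_subset)
  moreover have "(\<Sum>p\<in>J. (cmod (v p l))\<^sup>2) = 1"
    using frame_J l by (rule spectral_frame_col_norm)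
  ultimately show ?thesis
    by (simp only: of_real_eq_iff mult_1)
qed

lemma spectral_frame_subset_sum_overlap_J:
  "(\<Sum>l<card J. overlap J v l u i) = (\<Sum>p\<in>J. (cmod (u p i))\<^sup>2)"
proof -
  let ?Q = "\<Sum>p\<in>J. \<Sum>q\<in>J. cnj (u p i) * (if p = q then 1 else 0) * u q i"
  have "(if p = q then 1 else 0) = (\<Sum>l<card J. v p l * complex_of_real 1 * cnj (v q l))"
    if "p \<in> J" "q \<in> J" for p q
    using spectral_frameD(3)[OF frame_J that] by simp
  then have "?Q = complex_of_real (\<Sum>l<card J. 1 * (cmod (\<Sum>p\<in>J. cnj (u p i) * v p l))\<^sup>2)"
    by (rule quadratic_form_rank_one_sum)
  moreover have "?Q = complex_of_real (\<Sum>p\<in>J. (cmod (u p i))\<^sup>2)"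
    using JI fin by (intro quadratic_form_identity) (rule finite_subset)
  moreover have "cmod (\<Sum>p\<in>J. cnj (u p i) * v p l) = cmod (\<Sum>p\<in>J. cnj (v p l) * u p i)" for l
    by (subst complex_mod_cnj[symmetric]) (simp add: mult.commute)
  ultimately show ?thesis
    unfolding overlap_def by (simp only: of_real_eq_iff mult_1)
qed

lemma spectral_frame_subset_convex_le:
  assumes f: "convex_on UNIV f"
  shows "(\<Sum>l<card J. f (mu l)) \<le> (\<Sum>i<card I. f (lam i) * (\<Sum>p\<in>J. (cmod (u p i))\<^sup>2))"
proof -
  have "f (mu l) \<le> (\<Sum>i<card I. overlap J v l u i * f (lam i))" if l: "l < card J" for l
  proof -
    have "0 < card I"
      using l card_mono[OF fin JI] by linarith
    then have "{..<card I} \<noteq> {}"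
      by auto
    then have "f (\<Sum>i<card I. overlap J v l u i *\<^sub>R lam i)
        \<le> (\<Sum>i<card I. overlap J v l u i * f (lam i))"
      using spectral_frame_subset_sum_overlap_I[OF l]
      by (intro convex_on_sum[OF _ _ f]) (auto simp: overlap_def)
    then show ?thesis
      by (simp add: spectral_frame_subset_eigenvalue[OF l] mult.commute)
  qed
  then have "(\<Sum>l<card J. f (mu l)) \<le> (\<Sum>l<card J. \<Sum>i<card I. overlap J v l u i * f (lam i))"
    by (intro sum_mono) simp
  also have "\<dots> = (\<Sum>i<card I. f (lam i) * (\<Sum>l<card J. overlap J v l u i))"
    by (subst sum.swap) (simp add: sum_distrib_left mult.commute)
  finally show ?thesis
    by (simp only: spectral_frame_subset_sum_overlap_J)
qed

end

section \<open>Double counting of subsets\<close>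

lemma card_supsets_of_card:
  assumes N: "finite N" and JN: "J \<subseteq> N" and Jm: "card J \<le> m"
  shows "card {K. J \<subseteq> K \<and> K \<subseteq> N \<and> card K = m} = (card N - card J) choose (m - card J)"
proof -
  have J: "finite J"
    using JN N by (rule finite_subset)
  have "bij_betw (\<lambda>K. K - J) {K. J \<subseteq> K \<and> K \<subseteq> N \<and> card K = m}
      {K'. K' \<subseteq> N - J \<and> card K' = m - card J}"
  proof (rule bij_betw_byWitness[where f' = "\<lambda>K'. K' \<union> J"])
    show "(\<lambda>K. K - J) ` {K. J \<subseteq> K \<and> K \<subseteq> N \<and> card K = m}
        \<subseteq> {K'. K' \<subseteq> N - J \<and> card K' = m - card J}"
      using J by (auto simp: card_Diff_subset)
    have "card (K' \<union> J) = card K' + card J" if "K' \<subseteq> N - J" for K'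
      using that J finite_subset[OF that finite_Diff[OF N]] by (intro card_Un_disjoint) auto
    then show "(\<lambda>K'. K' \<union> J) ` {K'. K' \<subseteq> N - J \<and> card K' = m - card J}
        \<subseteq> {K. J \<subseteq> K \<and> K \<subseteq> N \<and> card K = m}"
      using JN Jm by auto
  qed auto
  then have "card {K. J \<subseteq> K \<and> K \<subseteq> N \<and> card K = m} = card (N - J) choose (m - card J)"
    using N by (simp add: bij_betw_same_card n_subsets)
  then show ?thesis
    using card_Diff_subset[OF J JN] by simp
qed

lemma sum_subsets_sum_subsets:
  fixes h :: "'a set \<Rightarrow> 'b::comm_semiring_1"
  assumes N: "finite N" and km: "k \<le> m"
  shows "(\<Sum>I | I \<subseteq> N \<and> card I = m. \<Sum>J | J \<subseteq> I \<and> card J = k. h J)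
    = of_nat ((card N - k) choose (m - k)) * (\<Sum>J | J \<subseteq> N \<and> card J = k. h J)"
proof -
  have fin: "finite {I. I \<subseteq> N \<and> card I = j}" for j
    by (rule finite_subset[of _ "Pow N"]) (use N in auto)
  have "(\<Sum>I | I \<subseteq> N \<and> card I = m. \<Sum>J | J \<subseteq> I \<and> card J = k. h J)
      = (\<Sum>I | I \<subseteq> N \<and> card I = m. \<Sum>J \<in> {J. J \<subseteq> N \<and> card J = k \<and> J \<subseteq> I}. h J)"
    by (intro sum.cong refl arg_cong[where f = "\<lambda>S. sum h S"]) auto
  also have "\<dots> = (\<Sum>J | J \<subseteq> N \<and> card J = k.
      of_nat (card {I. J \<subseteq> I \<and> I \<subseteq> N \<and> card I = m}) * h J)"
    using sum.swap_restrict[OF fin fin, where g = "\<lambda>I J. h J" and R = "\<lambda>I J. J \<subseteq> I"]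
    by (simp add: conj_commute conj_left_commute)
  also have "\<dots> = (\<Sum>J | J \<subseteq> N \<and> card J = k. of_nat ((card N - k) choose (m - k)) * h J)"
    using N km by (intro sum.cong refl) (auto simp: card_supsets_of_card)
  finally show ?thesis
    by (simp add: sum_distrib_left)
qed

lemma sum_subsets_sum_elements:
  fixes g :: "'a \<Rightarrow> 'b::comm_semiring_1"
  assumes I: "finite I" and k: "1 \<le> k"
  shows "(\<Sum>J | J \<subseteq> I \<and> card J = k. \<Sum>p\<in>J. g p) = of_nat ((card I - 1) choose (k - 1)) * (\<Sum>p\<in>I. g p)"
proof -
  have fin: "finite {J. J \<subseteq> I \<and> card J = k}"
    by (rule finite_subset[of _ "Pow I"]) (use I in auto)
  have "(\<Sum>J | J \<subseteq> I \<and> card J = k. \<Sum>p\<in>J. g p)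
      = (\<Sum>J | J \<subseteq> I \<and> card J = k. \<Sum>p \<in> {p\<in>I. p \<in> J}. g p)"
    by (intro sum.cong refl arg_cong[where f = "\<lambda>S. sum g S"]) auto
  also have "\<dots> = (\<Sum>p\<in>I. of_nat (card {J. {p} \<subseteq> J \<and> J \<subseteq> I \<and> card J = k}) * g p)"
    using sum.swap_restrict[OF fin I, where g = "\<lambda>J p. g p" and R = "\<lambda>J p. p \<in> J"]
    by (simp add: conj_commute conj_left_commute)
  also have "\<dots> = (\<Sum>p\<in>I. of_nat ((card I - 1) choose (k - 1)) * g p)"
    using card_supsets_of_card[OF I, of "{_}" k] k by (intro sum.cong refl) simp
  finally show ?thesis
    by (simp add: sum_distrib_left)
qed

section \<open>Convex functions summed over the eigenvalues of principal submatrices\<close>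

lemma spectral_frame_convex_sum_subsets_le:
  assumes frame_I: "spectral_frame A I u lam" and fin: "finite I" and k: "1 \<le> k"
    and frames: "\<And>J. J \<subseteq> I \<Longrightarrow> card J = k \<Longrightarrow> spectral_frame A J (v J) (mu J)"
    and f: "convex_on UNIV f"
  shows "(\<Sum>J | J \<subseteq> I \<and> card J = k. \<Sum>l<k. f (mu J l))
    \<le> real ((card I - 1) choose (k - 1)) * (\<Sum>i<card I. f (lam i))"
proof -
  have "(\<Sum>J | J \<subseteq> I \<and> card J = k. \<Sum>l<k. f (mu J l))
      \<le> (\<Sum>J | J \<subseteq> I \<and> card J = k. \<Sum>i<card I. f (lam i) * (\<Sum>p\<in>J. (cmod (u p i))\<^sup>2))"
    using spectral_frame_subset_convex_le[OF frame_I frames _ fin f] by (intro sum_mono) auto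
  also have "\<dots> = (\<Sum>i<card I. f (lam i) * (\<Sum>J | J \<subseteq> I \<and> card J = k. \<Sum>p\<in>J. (cmod (u p i))\<^sup>2))"
    by (subst sum.swap) (simp add: sum_distrib_left)
  also have "\<dots> = (\<Sum>i<card I. f (lam i) * real ((card I - 1) choose (k - 1)))"
  proof (intro sum.cong refl)
    fix i assume "i \<in> {..<card I}"
    then show "f (lam i) * (\<Sum>J | J \<subseteq> I \<and> card J = k. \<Sum>p\<in>J. (cmod (u p i))\<^sup>2)
        = f (lam i) * real ((card I - 1) choose (k - 1))"
      using sum_subsets_sum_elements[OF fin k, where g = "\<lambda>p. (cmod (u p i))\<^sup>2"]
        spectral_frame_col_norm[OF frame_I, of i]
      by simp
  qed
  also have "\<dots> = real ((card I - 1) choose (k - 1)) * (\<Sum>i<card I. f (lam i))"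
    by (subst sum_distrib_left) (simp add: mult.commute)
  finally show ?thesis .
qed

lemma sum_mset_repeat_mset:
  "(\<Sum>t\<in>#repeat_mset c M. f t) = of_nat c * (\<Sum>t\<in>#M. f t)"
  by (induction c) (simp_all add: ring_distribs sum_mset.distrib)

lemma sum_mset_sum:
  "(\<Sum>t\<in>#(\<Sum>I\<in>S. M I). f t) = (\<Sum>I\<in>S. \<Sum>t\<in>#M I. f t)"
  by (induction S rule: infinite_finite_induct) auto

lemma sum_mset_X:
  assumes n: "dim_row A = n"
    and frames: "\<And>I. I \<subseteq> {..<n} \<Longrightarrow> spectral_frame A I (u I) (lam I)"
  shows "(\<Sum>t\<in>#X k A. f t) = (\<Sum>I | I \<subseteq> {..<n} \<and> card I = k. \<Sum>i<k. f (lam I i))"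
  unfolding X_def sum_mset_sum n
proof (intro sum.cong refl)
  fix I assume "I \<in> {I. I \<subseteq> {..<n} \<and> card I = k}"
  then have eigenvalues:
      "image_mset Re (eigenvalues_mset (submatrix A I I)) = mset (map (lam I) [0..<k])"
    using spectral_frameD(4)[OF frames] by blast
  show "(\<Sum>t\<in>#image_mset Re (eigenvalues_mset (submatrix A I I)). f t) = (\<Sum>i<k. f (lam I i))"
    unfolding eigenvalues
    by (simp add: sum_unfold_sum_mset multiset.map_comp o_def atLeast0LessThan)
qed

theorem convex_sum_repeat_X_le:
  assumes A: "hermitian_mat A n" and k: "1 \<le> k" "k \<le> m" and f: "convex_on UNIV f"
  shows "(\<Sum>t\<in>#repeat_mset ((n - k) choose (m - k)) (X k A). f t)
    \<le> (\<Sum>t\<in>#repeat_mset ((m - 1) choose (k - 1)) (X m A). f t)"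
proof -
  have n: "dim_row A = n"
    using hermitian_matD(1)[OF A] by auto
  have "\<forall>I\<in>Pow {..<n}. \<exists>u lam. spectral_frame A I u lam"
    using spectral_frame_exists[OF A] by blast
  then obtain u where "\<forall>I\<in>Pow {..<n}. \<exists>lam. spectral_frame A I (u I) lam"
    by (rule bchoice[THEN exE]) blast
  then obtain lam where "\<forall>I\<in>Pow {..<n}. spectral_frame A I (u I) (lam I)"
    by (rule bchoice[THEN exE]) blast
  then have frames: "\<And>I. I \<subseteq> {..<n} \<Longrightarrow> spectral_frame A I (u I) (lam I)"
    by blast
  have "(\<Sum>t\<in>#repeat_mset ((n - k) choose (m - k)) (X k A). f t)
      = real ((n - k) choose (m - k)) * (\<Sum>J | J \<subseteq> {..<n} \<and> card J = k. \<Sum>l<k. f (lam J l))"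
    by (simp only: sum_mset_repeat_mset sum_mset_X[OF n frames])
  also have "\<dots> = (\<Sum>I | I \<subseteq> {..<n} \<and> card I = m. \<Sum>J | J \<subseteq> I \<and> card J = k. \<Sum>l<k. f (lam J l))"
    using sum_subsets_sum_subsets[of "{..<n}" k m "\<lambda>J. \<Sum>l<k. f (lam J l)"] k(2) by simp
  also have "\<dots> \<le> (\<Sum>I | I \<subseteq> {..<n} \<and> card I = m.
      real ((m - 1) choose (k - 1)) * (\<Sum>i<m. f (lam I i)))"
  proof (intro sum_mono)
    fix I assume "I \<in> {I. I \<subseteq> {..<n} \<and> card I = m}"
    then have I: "I \<subseteq> {..<n}" and card_I: "card I = m"
      by auto
    have "\<And>J. J \<subseteq> I \<Longrightarrow> card J = k \<Longrightarrow> spectral_frame A J (u J) (lam J)"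
      using frames I by blast
    from spectral_frame_convex_sum_subsets_le
      [OF frames[OF I] finite_subset[OF I finite_lessThan] k(1) this f]
    show "(\<Sum>J | J \<subseteq> I \<and> card J = k. \<Sum>l<k. f (lam J l))
        \<le> real ((m - 1) choose (k - 1)) * (\<Sum>i<m. f (lam I i))"
      unfolding card_I .
  qed
  also have "\<dots> = real ((m - 1) choose (k - 1)) * (\<Sum>I | I \<subseteq> {..<n} \<and> card I = m. \<Sum>i<m. f (lam I i))"
    by (simp add: sum_distrib_left)
  also have "\<dots> = (\<Sum>t\<in>#repeat_mset ((m - 1) choose (k - 1)) (X m A). f t)"
    by (simp only: sum_mset_repeat_mset sum_mset_X[OF n frames])
  finally show ?thesis .
qed

section \<open>Majorization\<close>

lemma convex_on_max:
  assumes f: "convex_on S f" and g: "convex_on S g"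
  shows "convex_on S (\<lambda>x. max (f x) (g x))"
  unfolding convex_on_def
proof (intro conjI ballI allI impI)
  show "convex S"
    using f by (rule convex_on_imp_convex)
  fix x y and a b :: real
  assume xy: "x \<in> S" "y \<in> S" and ab: "0 \<le> a" "0 \<le> b" "a + b = 1"
  have "a * f x \<le> a * max (f x) (g x)" "b * f y \<le> b * max (f y) (g y)"
    "a * g x \<le> a * max (f x) (g x)" "b * g y \<le> b * max (f y) (g y)"
    using ab by (simp_all add: mult_left_mono)
  moreover have "f (a *\<^sub>R x + b *\<^sub>R y) \<le> a * f x + b * f y"
    "g (a *\<^sub>R x + b *\<^sub>R y) \<le> a * g x + b * g y"
    using f g xy ab unfolding convex_on_def by blast+
  ultimately show "max (f (a *\<^sub>R x + b *\<^sub>R y)) (g (a *\<^sub>R x + b *\<^sub>R y))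
      \<le> a * max (f x) (g x) + b * max (f y) (g y)"
    by linarith
qed

lemma convex_on_affine: "convex_on UNIV (\<lambda>t::real. a * t + b)"
  by (intro convex_onI) (auto simp: algebra_simps)

lemma convex_on_hinge: "convex_on UNIV (\<lambda>t::real. max 0 (t - s))"
  using convex_on_max[OF convex_on_const[THEN iffD2] convex_on_affine[of 1 "- s"]] by simp

lemma mset_desc [simp]: "mset (desc M) = M"
  unfolding desc_def by simp

lemma length_desc [simp]: "length (desc M) = size M"
  by (metis mset_desc size_mset)

lemma sorted_desc: "sorted_wrt (\<ge>) (desc M)"
  unfolding desc_def sorted_wrt_rev using sorted_sorted_list_of_multiset[of M] by simp

lemma sum_mset_desc: "(\<Sum>t\<in>#M. f t) = (\<Sum>t\<leftarrow>desc M. f t)"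
  by (metis mset_desc mset_map sum_mset_sum_list)

lemma sum_take_le_hinge:
  fixes L :: "real list"
  assumes "k \<le> length L"
  shows "sum_list (take k L) \<le> real k * s + (\<Sum>t\<leftarrow>L. max 0 (t - s))"
  using assms
proof (induction L arbitrary: k)
  case (Cons a L k)
  show ?case
  proof (cases k)
    case 0
    have "0 \<le> (\<Sum>t\<leftarrow>a # L. max 0 (t - s))"
      by (rule sum_list_nonneg) auto
    then show ?thesis
      using 0 by simp
  next
    case (Suc k')
    with Cons have "sum_list (take k' L) \<le> real k' * s + (\<Sum>t\<leftarrow>L. max 0 (t - s))"
      by simp
    moreover have "a \<le> s + max 0 (a - s)"
      by simp
    ultimately show ?thesis
      using Suc by (simp add: algebra_simps)
  qed
qed simp

lemma sum_take_sorted_eq_hinge: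
  fixes L :: "real list"
  assumes sorted: "sorted_wrt (\<ge>) L" and k: "1 \<le> k" "k \<le> length L"
  defines "s \<equiv> L ! (k - 1)"
  shows "sum_list (take k L) = real k * s + (\<Sum>t\<leftarrow>L. max 0 (t - s))"
proof -
  have "s \<le> t" if "t \<in> set (take k L)" for t
  proof -
    obtain i where i: "i < k" "i < length L" and t: "t = L ! i"
      using \<open>t \<in> set (take k L)\<close> by (auto simp: in_set_conv_nth)
    show ?thesis
    proof (cases "i = k - 1")
      case False
      then show ?thesis
        using sorted_wrt_nth_less[OF sorted, of i "k - 1"] i k t unfolding s_def by simp
    qed (simp add: s_def t)
  qed
  then have "map (\<lambda>t. max 0 (t - s)) (take k L) = map (\<lambda>t. t - s) (take k L)"
    by (intro map_cong) auto
  moreover have "t \<le> s" if "t \<in> set (drop k L)" for t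
  proof -
    obtain j where "j < length L - k" and "t = drop k L ! j"
      using \<open>t \<in> set (drop k L)\<close> by (auto simp: in_set_conv_nth)
    then have "k + j < length L" and t: "t = L ! (k + j)"
      using k by auto
    then show ?thesis
      using sorted_wrt_nth_less[OF sorted, of "k - 1" "k + j"] k unfolding s_def by simp
  qed
  then have "map (\<lambda>t. max 0 (t - s)) (drop k L) = map (\<lambda>t. 0) (drop k L)"
    by (intro map_cong) auto
  ultimately have "(\<Sum>t\<leftarrow>L. max 0 (t - s)) = (\<Sum>t\<leftarrow>take k L. t - s) + (\<Sum>t\<leftarrow>drop k L. 0)"
    by (metis append_take_drop_id map_append sum_list_append)
  also have "\<dots> = sum_list (take k L) - real k * s"
    using k by (simp add: sum_list_subtractf sum_list_triv)
  finally show ?thesis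
    by simp
qed

text \<open>Hinge functions detect partial sums: for a non-increasing list the sum of its \<open>k\<close> largest
  entries is the minimum over \<open>s\<close> of \<open>k s + \<Sum> max 0 (t - s)\<close>, attained at the \<open>k\<close>-th entry.\<close>

lemma sum_mset_affine: "(\<Sum>t\<in>#M. a * t + b) = a * (\<Sum>t\<in>#M. t) + of_nat (size M) * b"
  by (induction M) (simp_all add: algebra_simps)

lemma majorizes_if_convex_sums_le:
  assumes convex: "\<And>f. convex_on UNIV f \<Longrightarrow> (\<Sum>t\<in>#y. f t) \<le> (\<Sum>t\<in>#x. f t)"
  shows "majorizes x y"
proof -
  have affine: "a * (\<Sum>t\<in>#y. t) + real (size y) * b \<le> a * (\<Sum>t\<in>#x. t) + real (size x) * b"
    for a b
    using convex[OF convex_on_affine] unfolding sum_mset_affine .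
  have "real (size x) = real (size y)"
    using affine[of 0 1] affine[of 0 "- 1"] by linarith
  then have size: "size x = size y"
    by simp
  have sum: "(\<Sum>t\<in>#x. t) = (\<Sum>t\<in>#y. t)"
    using affine[of 1 0] affine[of "- 1" 0] by linarith
  have partial: "sum_list (take k (desc y)) \<le> sum_list (take k (desc x))"
    if k: "1 \<le> k" "k \<le> size x" for k
  proof -
    define s where "s = desc x ! (k - 1)"
    have "sum_list (take k (desc y)) \<le> real k * s + (\<Sum>t\<in>#y. max 0 (t - s))"
      unfolding sum_mset_desc using k size by (intro sum_take_le_hinge) simp
    also have "\<dots> \<le> real k * s + (\<Sum>t\<in>#x. max 0 (t - s))"
      using convex[OF convex_on_hinge] by simp
    also have "\<dots> = sum_list (take k (desc x))"
      unfolding sum_mset_desc s_def using k sorted_desc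
      by (intro sum_take_sorted_eq_hinge[symmetric]) simp_all
    finally show ?thesis .
  qed
  show ?thesis
    unfolding majorizes_def
    using size partial sum sum_mset_desc[of "\<lambda>t. t"] by auto
qed

theorem theorem4p1:
  fixes A :: "complex mat" and n k m :: nat
  assumes "hermitian_mat A n"
    and "1 \<le> k" and "k \<le> m" and "m \<le> n"
  shows "majorizes (repeat_mset ((m - 1) choose (k - 1)) (X m A))
                   (repeat_mset ((n - k) choose (m - k)) (X k A))"
  by (rule majorizes_if_convex_sums_le) (rule convex_sum_repeat_X_le[OF assms(1-3)])

end
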